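(* Let $n\ge1$ and $P=[2]\times[n]$. The statistic $I\mapsto|\mathrm{Max}(I)|-|\mathrm{Min}(I)|$ (number of maximal elements of $I$ minus number of minimal elements of $I$) is $0$-mesic under rowmotion on $\mathcal{IC}(P)$.
   Context: $[n]$ is the chain $1<\cdots<n$; $[2]\times[n]$ has the componentwise order. All posets are finite. A subset $I\subseteq P$ is interval-closed if for all $x,y\in I$ and $z\in P$ with $x\le z\le y$ we have $z\in I$; $\mathcal{IC}(P)$ is the set of interval-closed subsets of $P$. For $x\in P$ the toggle $t_x:\mathcal{IC}(P)\to\mathcal{IC}(P)$ is defined by $t_x(I)=I\triangle\{x\}$ if $I\triangle\{x\}\in\mathcal{IC}(P)$ and $t_x(I)=I$ otherwise. Rowmotion is $\mathrm{Row}=t_{x_1}\circ t_{x_2}\circ\cdots\circ t_{x_N}$, where $(x_1,\dots,x_N)$ is a linear extension of $P$ (toggling from the top down). $\mathrm{Max}(I)$ and $\mathrm{Min}(I)$ are the sets of maximal and minimal elements of $I$ (empty if $I=\emptyset$). A statistic is $c$-mesic if its average over every rowmotion orbit equals $c$. *)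

theory Defs
  imports Complex_Main
begin

definition twoByN :: "nat \<Rightarrow> (nat \<times> nat) set" where
  "twoByN n = {1..2} \<times> {1..n}"

definition cle :: "nat \<times> nat \<Rightarrow> nat \<times> nat \<Rightarrow> bool" where
  "cle x y \<longleftrightarrow> fst x \<le> fst y \<and> snd x \<le> snd y"

definition interval_closed :: "'a set \<Rightarrow> ('a \<Rightarrow> 'a \<Rightarrow> bool) \<Rightarrow> 'a set \<Rightarrow> bool" where
  "interval_closed P le I \<longleftrightarrow> I \<subseteq> P \<and>
     (\<forall>x\<in>I. \<forall>y\<in>I. \<forall>z\<in>P. le x z \<and> le z y \<longrightarrow> z \<in> I)"

definition IC :: "'a set \<Rightarrow> ('a \<Rightarrow> 'a \<Rightarrow> bool) \<Rightarrow> 'a set set" where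
  "IC P le = {I. interval_closed P le I}"

definition toggle :: "'a set \<Rightarrow> ('a \<Rightarrow> 'a \<Rightarrow> bool) \<Rightarrow> 'a \<Rightarrow> 'a set \<Rightarrow> 'a set" where
  "toggle P le x I = (if interval_closed P le ((I - {x}) \<union> ({x} - I)) then (I - {x}) \<union> ({x} - I) else I)"

definition linear_extension :: "'a set \<Rightarrow> ('a \<Rightarrow> 'a \<Rightarrow> bool) \<Rightarrow> 'a list \<Rightarrow> bool" where
  "linear_extension P le xs \<longleftrightarrow> distinct xs \<and> set xs = P \<and>
     (\<forall>i<length xs. \<forall>j<length xs. le (xs ! i) (xs ! j) \<longrightarrow> i \<le> j)"

(* Row = t_{x_1} o t_{x_2} o ... o t_{x_N}: x_N (top) is toggled first. *)
definition rowmotion :: "'a set \<Rightarrow> ('a \<Rightarrow> 'a \<Rightarrow> bool) \<Rightarrow> 'a list \<Rightarrow> 'a set \<Rightarrow> 'a set" where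
  "rowmotion P le xs I = foldr (toggle P le) xs I"

definition maxel :: "('a \<Rightarrow> 'a \<Rightarrow> bool) \<Rightarrow> 'a set \<Rightarrow> 'a set" where
  "maxel le I = {x \<in> I. \<forall>y\<in>I. le x y \<longrightarrow> y = x}"

definition minel :: "('a \<Rightarrow> 'a \<Rightarrow> bool) \<Rightarrow> 'a set \<Rightarrow> 'a set" where
  "minel le I = {x \<in> I. \<forall>y\<in>I. le y x \<longrightarrow> y = x}"

definition orbit :: "('b \<Rightarrow> 'b) \<Rightarrow> 'b \<Rightarrow> 'b set" where
  "orbit f x = {(f ^^ k) x | k. True}"

definition mesic :: "'b set \<Rightarrow> ('b \<Rightarrow> 'b) \<Rightarrow> ('b \<Rightarrow> real) \<Rightarrow> real \<Rightarrow> bool" where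
  "mesic S f st c \<longleftrightarrow>
     (\<forall>x\<in>S. (\<Sum>y\<in>orbit f x. st y) / real (card (orbit f x)) = c)"

end

theory Submission
  imports Defs
begin

text \<open>An interval-closed subset \<open>I\<close> of \<open>[2] \<times> [n]\<close> is an interval in each row; if both rows are
  nonempty and some element of row 1 lies below some element of row 2, then row 2 starts and ends
  no later than row 1. Counting extremal elements gives \<open>|Max I| - |Min I| = [row 1 ends after
  row 2] - [row 2 starts before row 1]\<close>, both brackets requiring linked rows. Following the
  toggles of rowmotion one element at a time shows that \<open>I\<close> overhangs to the right iff \<open>Row I\<close>
  overhangs to the left, so the statistic is a coboundary \<open>g (Row I) - g I\<close>, which telescopes to
  zero over every orbit.\<close>

lemma mem_toggle_other: "y \<noteq> x \<Longrightarrow> y \<in> toggle P le x J \<longleftrightarrow> y \<in> J"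
  by (auto simp: toggle_def)

lemma toggle_mem:
  assumes "x \<in> J"
  shows "toggle P le x J = (if interval_closed P le (J - {x}) then J - {x} else J)"
proof -
  have "(J - {x}) \<union> ({x} - J) = J - {x}" using assms by auto
  then show ?thesis by (simp add: toggle_def)
qed

lemma toggle_nonmem:
  assumes "x \<notin> J"
  shows "toggle P le x J = (if interval_closed P le (insert x J) then insert x J else J)"
proof -
  have "(J - {x}) \<union> ({x} - J) = insert x J" using assms by auto
  then show ?thesis by (simp add: toggle_def)
qed

lemma interval_closed_toggle:
  "interval_closed P le J \<Longrightarrow> interval_closed P le (toggle P le x J)"
  by (simp add: toggle_def)

lemma toggle_toggle:
  assumes "interval_closed P le J"
  shows "toggle P le x (toggle P le x J) = J"
  using assms by (cases "x \<in> J") (auto simp: toggle_mem toggle_nonmem insert_absorb)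

lemma mem_foldr_toggle_notin:
  "y \<notin> set ys \<Longrightarrow> y \<in> foldr (toggle P le) ys J \<longleftrightarrow> y \<in> J"
  by (induction ys) (auto simp: mem_toggle_other)

lemma interval_closed_foldr_toggle:
  "interval_closed P le J \<Longrightarrow> interval_closed P le (foldr (toggle P le) ys J)"
  by (induction ys) (auto simp: interval_closed_toggle)

lemma foldr_toggle_inj:
  assumes "interval_closed P le J" "interval_closed P le K"
    and "foldr (toggle P le) ys J = foldr (toggle P le) ys K"
  shows "J = K"
  using assms
proof (induction ys)
  case (Cons y ys)
  then have "toggle P le y (toggle P le y (foldr (toggle P le) ys J)) =
             toggle P le y (toggle P le y (foldr (toggle P le) ys K))"
    by simp
  then show ?case
    using Cons by (simp add: toggle_toggle interval_closed_foldr_toggle)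
qed simp

lemma interval_closed_rowmotion:
  "interval_closed P le I \<Longrightarrow> interval_closed P le (rowmotion P le xs I)"
  unfolding rowmotion_def by (rule interval_closed_foldr_toggle)

lemma rowmotion_in_IC: "I \<in> IC P le \<Longrightarrow> rowmotion P le xs I \<in> IC P le"
  by (simp add: IC_def interval_closed_rowmotion)

lemma inj_on_rowmotion: "inj_on (rowmotion P le xs) (IC P le)"
  unfolding inj_on_def IC_def rowmotion_def using foldr_toggle_inj by blast

lemma finite_IC: "finite P \<Longrightarrow> finite (IC P le)"
  by (rule finite_subset[of _ "Pow P"]) (auto simp: IC_def interval_closed_def)

lemma linear_extension_split_not_le:
  assumes "linear_extension P le (ys @ x # zs)"
  shows "a \<in> set zs \<Longrightarrow> \<not> le a x" and "b \<in> set ys \<Longrightarrow> \<not> le x b"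
proof -
  let ?xs = "ys @ x # zs"
  have ord: "\<And>i j. i < length ?xs \<Longrightarrow> j < length ?xs \<Longrightarrow> le (?xs ! i) (?xs ! j) \<Longrightarrow> i \<le> j"
    using assms unfolding linear_extension_def by blast
  have x: "?xs ! length ys = x" by simp
  show "\<not> le a x" if a: "a \<in> set zs"
  proof
    assume "le a x"
    obtain j where "j < length zs" "zs ! j = a" using a by (auto simp: in_set_conv_nth)
    then have "?xs ! (length ys + Suc j) = a" "length ys + Suc j < length ?xs"
      by (simp_all add: nth_append)
    with \<open>le a x\<close> x show False using ord[of "length ys + Suc j" "length ys"] by simp
  qed
  show "\<not> le x b" if b: "b \<in> set ys"
  proof
    assume "le x b"
    obtain j where "j < length ys" "ys ! j = b" using b by (auto simp: in_set_conv_nth)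
    then have "?xs ! j = b" by (simp add: nth_append)
    with \<open>le x b\<close> x \<open>j < length ys\<close> show False using ord[of "length ys" j] by simp
  qed
qed

lemma mesic_zero_if_coboundary:
  fixes g :: "'b \<Rightarrow> real"
  assumes fin: "finite S" and into: "f ` S \<subseteq> S" and inj: "inj_on f S"
    and coboundary: "\<And>y. y \<in> S \<Longrightarrow> st y = g (f y) - g y"
  shows "mesic S f st 0"
  unfolding mesic_def
proof
  fix x assume "x \<in> S"
  let ?O = "orbit f x"
  have "(f ^^ k) x \<in> S" for k
    by (induction k) (use \<open>x \<in> S\<close> into in auto)
  then have OS: "?O \<subseteq> S" by (auto simp: orbit_def)
  have "f ` ?O \<subseteq> ?O"
  proof
    fix y assume "y \<in> f ` ?O"
    then obtain k where "y = f ((f ^^ k) x)" by (auto simp: orbit_def)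
    then have "y = (f ^^ Suc k) x" by simp
    then show "y \<in> ?O" unfolding orbit_def by blast
  qed
  moreover have inj_O: "inj_on f ?O" using inj OS by (rule inj_on_subset)
  moreover have "finite ?O" using fin OS by (rule finite_subset[rotated])
  ultimately have perm: "f ` ?O = ?O" by (metis endo_inj_surj)
  have "(\<Sum>y\<in>?O. st y) = (\<Sum>y\<in>?O. g (f y) - g y)"
    using OS coboundary by (intro sum.cong) auto
  also have "\<dots> = (\<Sum>y\<in>?O. g (f y)) - (\<Sum>y\<in>?O. g y)"
    by (rule sum_subtractf)
  also have "(\<Sum>y\<in>?O. g (f y)) = (\<Sum>y\<in>?O. g y)"
    using sum.reindex[OF inj_O, of g] perm by simp
  finally have "(\<Sum>y\<in>?O. st y) = 0" by simp
  then show "(\<Sum>y\<in>?O. st y) / real (card ?O) = 0" by simp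
qed

locale poset_on =
  fixes P :: "'a set" and le :: "'a \<Rightarrow> 'a \<Rightarrow> bool"
  assumes order_trans_on: "x \<in> P \<Longrightarrow> y \<in> P \<Longrightarrow> z \<in> P \<Longrightarrow> le x y \<Longrightarrow> le y z \<Longrightarrow> le x z"
    and order_antisym_on: "x \<in> P \<Longrightarrow> y \<in> P \<Longrightarrow> le x y \<Longrightarrow> le y x \<Longrightarrow> x = y"
begin

definition has_lower :: "'a set \<Rightarrow> 'a \<Rightarrow> bool" where
  "has_lower I x \<longleftrightarrow> (\<exists>a\<in>I. le a x \<and> a \<noteq> x)"

definition has_upper :: "'a set \<Rightarrow> 'a \<Rightarrow> bool" where
  "has_upper R x \<longleftrightarrow> (\<exists>b\<in>R. le x b \<and> b \<noteq> x)"

definition gap_below :: "'a set \<Rightarrow> 'a \<Rightarrow> bool" where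
  "gap_below I x \<longleftrightarrow> (\<exists>a\<in>I. \<exists>z\<in>P. le a z \<and> le z x \<and> z \<notin> I \<and> z \<noteq> x)"

definition gap_above :: "'a set \<Rightarrow> 'a \<Rightarrow> bool" where
  "gap_above R x \<longleftrightarrow> (\<exists>b\<in>R. \<exists>z\<in>P. le x z \<and> le z b \<and> z \<notin> R \<and> z \<noteq> x)"

lemma not_sandwiched_if_outside:
  assumes "interval_closed P le K" "x \<in> P" "x \<notin> K"
    and "\<And>a. le a x \<Longrightarrow> a \<noteq> x \<Longrightarrow> a \<in> K \<longleftrightarrow> a \<in> I"
    and "\<And>b. le x b \<Longrightarrow> b \<noteq> x \<Longrightarrow> b \<in> K \<longleftrightarrow> b \<in> R"
  shows "\<not> (has_lower I x \<and> has_upper R x)"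
  using assms unfolding has_lower_def has_upper_def interval_closed_def by blast

lemma no_gap_if_inside:
  assumes K: "interval_closed P le K" and "x \<in> K" and "I \<subseteq> P" "R \<subseteq> P"
    and below: "\<And>a. le a x \<Longrightarrow> a \<noteq> x \<Longrightarrow> a \<in> K \<longleftrightarrow> a \<in> I"
    and above: "\<And>b. le x b \<Longrightarrow> b \<noteq> x \<Longrightarrow> b \<in> K \<longleftrightarrow> b \<in> R"
  shows "\<not> gap_below I x \<and> \<not> gap_above R x"
proof
  have x: "x \<in> P" using K \<open>x \<in> K\<close> by (auto simp: interval_closed_def)
  show "\<not> gap_below I x"
  proof
    assume "gap_below I x"
    then obtain a z where a: "a \<in> I" and z: "z \<in> P" "le a z" "le z x" "z \<notin> I" "z \<noteq> x"
      unfolding gap_below_def by blast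
    have "a \<in> P" using a \<open>I \<subseteq> P\<close> by blast
    then have "a \<noteq> x" and "le a x"
      using z x order_antisym_on order_trans_on by blast+
    then have "a \<in> K" using below a by blast
    then have "z \<in> K" using K \<open>x \<in> K\<close> z unfolding interval_closed_def by blast
    with below z show False by blast
  qed
  show "\<not> gap_above R x"
  proof
    assume "gap_above R x"
    then obtain b z where b: "b \<in> R" and z: "z \<in> P" "le x z" "le z b" "z \<notin> R" "z \<noteq> x"
      unfolding gap_above_def by blast
    have "b \<in> P" using b \<open>R \<subseteq> P\<close> by blast
    then have "b \<noteq> x" and "le x b"
      using z x order_antisym_on order_trans_on by blast+
    then have "b \<in> K" using above b by blast
    then have "z \<in> K" using K \<open>x \<in> K\<close> z unfolding interval_closed_def by blast
    with above z show False by blast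
  qed
qed

context
  fixes xs :: "'a list"
  assumes lin: "linear_extension P le xs"
begin

text \<open>When rowmotion toggles \<open>x\<close>, everything strictly below \<open>x\<close> is still as in \<open>I\<close>
  and everything strictly above \<open>x\<close> is already as in the image.\<close>

lemma rowmotion_toggle_split:
  assumes I: "interval_closed P le I" and x: "x \<in> P"
  obtains J where "interval_closed P le J"
    and "x \<in> J \<longleftrightarrow> x \<in> I" and "x \<in> toggle P le x J \<longleftrightarrow> x \<in> rowmotion P le xs I"
    and "\<And>a. le a x \<Longrightarrow> a \<noteq> x \<Longrightarrow> a \<in> J \<longleftrightarrow> a \<in> I"
    and "\<And>b. le x b \<Longrightarrow> b \<noteq> x \<Longrightarrow> b \<in> J \<longleftrightarrow> b \<in> rowmotion P le xs I"
proof -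
  obtain ys zs where xs: "xs = ys @ x # zs"
    using x lin split_list unfolding linear_extension_def by metis
  have x_out: "x \<notin> set ys" "x \<notin> set zs" using lin by (auto simp: xs linear_extension_def)
  note not_le = linear_extension_split_not_le[OF lin[unfolded xs]]
  define J where "J = foldr (toggle P le) zs I"
  have R: "rowmotion P le xs I = foldr (toggle P le) ys (toggle P le x J)"
    by (simp add: rowmotion_def xs J_def)
  show thesis
  proof (rule that)
    show "interval_closed P le J" unfolding J_def using I by (rule interval_closed_foldr_toggle)
    show "x \<in> J \<longleftrightarrow> x \<in> I" unfolding J_def by (rule mem_foldr_toggle_notin[OF x_out(2)])
    show "x \<in> toggle P le x J \<longleftrightarrow> x \<in> rowmotion P le xs I"
      unfolding R using x_out by (simp add: mem_foldr_toggle_notin)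
    show "a \<in> J \<longleftrightarrow> a \<in> I" if "le a x" for a
      unfolding J_def using not_le(1) that by (metis mem_foldr_toggle_notin)
    show "b \<in> J \<longleftrightarrow> b \<in> rowmotion P le xs I" if "le x b" "b \<noteq> x" for b
    proof -
      have "b \<notin> set ys" using not_le(2) that(1) by blast
      then show ?thesis unfolding R using that(2) by (simp add: mem_foldr_toggle_notin mem_toggle_other)
    qed
  qed
qed

lemma kept_by_rowmotion_imp_sandwiched:
  assumes I: "interval_closed P le I" and x: "x \<in> P"
    and "x \<in> I" "x \<in> rowmotion P le xs I"
  shows "has_lower I x \<and> has_upper (rowmotion P le xs I) x"
proof -
  obtain J where J: "interval_closed P le J" "x \<in> J \<longleftrightarrow> x \<in> I"
      "x \<in> toggle P le x J \<longleftrightarrow> x \<in> rowmotion P le xs I"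
    and below: "\<And>a. le a x \<Longrightarrow> a \<noteq> x \<Longrightarrow> a \<in> J \<longleftrightarrow> a \<in> I"
    and above: "\<And>b. le x b \<Longrightarrow> b \<noteq> x \<Longrightarrow> b \<in> J \<longleftrightarrow> b \<in> rowmotion P le xs I"
    using rowmotion_toggle_split[OF I x] by blast
  have "x \<in> J" "x \<in> toggle P le x J" using J assms by blast+
  then have "\<not> interval_closed P le (J - {x})" by (simp add: toggle_mem split: if_splits)
  moreover have "J - {x} \<subseteq> P" using J by (auto simp: interval_closed_def)
  ultimately obtain u v z where uv: "u \<in> J - {x}" "v \<in> J - {x}" "z \<in> P" "le u z" "le z v"
      "z \<notin> J - {x}"
    unfolding interval_closed_def by blast
  then have "z = x" using J unfolding interval_closed_def by blast
  with uv below above show ?thesis unfolding has_lower_def has_upper_def by auto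
qed

lemma mem_rowmotion_iff_if_sandwiched:
  assumes I: "interval_closed P le I" and x: "x \<in> P"
    and sandwiched: "has_lower I x" "has_upper (rowmotion P le xs I) x"
  shows "x \<in> rowmotion P le xs I \<longleftrightarrow> x \<in> I"
proof (rule ccontr)
  assume moved: "\<not> (x \<in> rowmotion P le xs I \<longleftrightarrow> x \<in> I)"
  obtain J where J: "interval_closed P le J" "x \<in> J \<longleftrightarrow> x \<in> I"
      "x \<in> toggle P le x J \<longleftrightarrow> x \<in> rowmotion P le xs I"
    and below: "\<And>a. le a x \<Longrightarrow> a \<noteq> x \<Longrightarrow> a \<in> J \<longleftrightarrow> a \<in> I"
    and above: "\<And>b. le x b \<Longrightarrow> b \<noteq> x \<Longrightarrow> b \<in> J \<longleftrightarrow> b \<in> rowmotion P le xs I"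
    using rowmotion_toggle_split[OF I x] by blast
  show False
  proof (cases "x \<in> J")
    case True
    then have "x \<notin> toggle P le x J" using J moved by blast
    then show False
      using not_sandwiched_if_outside[OF interval_closed_toggle[OF J(1)] x] below above sandwiched
      by (simp add: mem_toggle_other)
  next
    case False
    then show False using not_sandwiched_if_outside[OF J(1) x] below above sandwiched by blast
  qed
qed

lemma mem_rowmotion_iff_if_gap:
  assumes I: "interval_closed P le I" and x: "x \<in> P"
    and gap: "gap_below I x \<or> gap_above (rowmotion P le xs I) x"
  shows "x \<in> rowmotion P le xs I \<longleftrightarrow> x \<in> I"
proof (rule ccontr)
  assume moved: "\<not> (x \<in> rowmotion P le xs I \<longleftrightarrow> x \<in> I)"
  obtain J where J: "interval_closed P le J" "x \<in> J \<longleftrightarrow> x \<in> I"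
      "x \<in> toggle P le x J \<longleftrightarrow> x \<in> rowmotion P le xs I"
    and below: "\<And>a. le a x \<Longrightarrow> a \<noteq> x \<Longrightarrow> a \<in> J \<longleftrightarrow> a \<in> I"
    and above: "\<And>b. le x b \<Longrightarrow> b \<noteq> x \<Longrightarrow> b \<in> J \<longleftrightarrow> b \<in> rowmotion P le xs I"
    using rowmotion_toggle_split[OF I x] by blast
  have IP: "I \<subseteq> P" "rowmotion P le xs I \<subseteq> P"
    using I interval_closed_rowmotion[OF I] unfolding interval_closed_def by blast+
  show False
  proof (cases "x \<in> J")
    case True
    then show False using no_gap_if_inside[OF J(1) True IP] below above gap by blast
  next
    case False
    then have "x \<in> toggle P le x J" using J moved by blast
    then show False
      using no_gap_if_inside[OF interval_closed_toggle[OF J(1)] _ IP] below above gap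
      by (simp add: mem_toggle_other)
  qed
qed

lemma avoided_by_rowmotion_imp_gap:
  assumes I: "interval_closed P le I" and x: "x \<in> P"
    and "x \<notin> I" "x \<notin> rowmotion P le xs I"
  shows "gap_below I x \<or> gap_above (rowmotion P le xs I) x"
proof -
  obtain J where J: "interval_closed P le J" "x \<in> J \<longleftrightarrow> x \<in> I"
      "x \<in> toggle P le x J \<longleftrightarrow> x \<in> rowmotion P le xs I"
    and below: "\<And>a. le a x \<Longrightarrow> a \<noteq> x \<Longrightarrow> a \<in> J \<longleftrightarrow> a \<in> I"
    and above: "\<And>b. le x b \<Longrightarrow> b \<noteq> x \<Longrightarrow> b \<in> J \<longleftrightarrow> b \<in> rowmotion P le xs I"
    using rowmotion_toggle_split[OF I x] by blast
  have "x \<notin> J" "x \<notin> toggle P le x J" using J assms by blast+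
  then have "\<not> interval_closed P le (insert x J)" by (simp add: toggle_nonmem split: if_splits)
  moreover have JP: "J \<subseteq> P" using J by (auto simp: interval_closed_def)
  ultimately obtain u v z where uv: "u \<in> insert x J" "v \<in> insert x J" "z \<in> P" "le u z" "le z v"
      "z \<notin> insert x J"
    using x unfolding interval_closed_def by blast
  have "u \<in> P" "v \<in> P" using uv x JP by auto
  consider "u = x" | "v = x" | "u \<in> J" "v \<in> J" using uv by blast
  then show ?thesis
  proof cases
    case 1
    then have "v \<noteq> x" using uv x order_antisym_on by blast
    then have "v \<in> rowmotion P le xs I" "z \<notin> rowmotion P le xs I"
      using above uv 1 x \<open>v \<in> P\<close> order_trans_on by blast+
    then show ?thesis using uv 1 unfolding gap_above_def by blast
  next
    case 2
    then have "u \<noteq> x" using uv x order_antisym_on by blast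
    then have "u \<in> I" "z \<notin> I"
      using below uv 2 x \<open>u \<in> P\<close> order_trans_on by blast+
    then show ?thesis using uv 2 unfolding gap_below_def by blast
  next
    case 3
    then show ?thesis using J(1) uv unfolding interval_closed_def by blast
  qed
qed

end

end

interpretation grid: poset_on "twoByN n" cle for n
  by unfold_locales (auto simp: cle_def prod_eq_iff)

lemma mem_twoByN: "(i, j) \<in> twoByN n \<longleftrightarrow> 1 \<le> i \<and> i \<le> 2 \<and> 1 \<le> j \<and> j \<le> n"
  by (auto simp: twoByN_def)

definition two_rows :: "nat \<Rightarrow> nat \<Rightarrow> nat \<Rightarrow> nat \<Rightarrow> (nat \<times> nat) set" where
  "two_rows p1 q1 p2 q2 = {1} \<times> {p1..q1} \<union> {2} \<times> {p2..q2}"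

lemma mem_two_rows [simp]:
  "(i, j) \<in> two_rows p1 q1 p2 q2 \<longleftrightarrow> i = 1 \<and> p1 \<le> j \<and> j \<le> q1 \<or> i = 2 \<and> p2 \<le> j \<and> j \<le> q2"
  by (auto simp: two_rows_def)

lemma interval_closed_twoByN_row:
  assumes IC: "interval_closed (twoByN n) cle I"
  obtains p q where "1 \<le> p" "q \<le> n" "\<And>j. (i, j) \<in> I \<longleftrightarrow> p \<le> j \<and> j \<le> q"
proof (cases "{j. (i, j) \<in> I} = {}")
  case True
  show thesis by (rule that[of 1 0]) (use True in auto)
next
  case False
  let ?r = "{j. (i, j) \<in> I}"
  have IP: "I \<subseteq> twoByN n" using IC by (simp add: interval_closed_def)
  then have sub: "?r \<subseteq> {1..n}" by (auto simp: mem_twoByN)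
  then have fin: "finite ?r" by (rule finite_subset) simp
  have min_in: "(i, Min ?r) \<in> I" and max_in: "(i, Max ?r) \<in> I"
    using Min_in[OF fin False] Max_in[OF fin False] by simp_all
  have bounds: "1 \<le> Min ?r" "Max ?r \<le> n" using sub Min_in[OF fin False] Max_in[OF fin False] by auto
  have "(i, j) \<in> I \<longleftrightarrow> Min ?r \<le> j \<and> j \<le> Max ?r" for j
  proof
    assume "(i, j) \<in> I" then show "Min ?r \<le> j \<and> j \<le> Max ?r" using fin by auto
  next
    assume j: "Min ?r \<le> j \<and> j \<le> Max ?r"
    have "(i, j) \<in> twoByN n" using j bounds IP min_in by (auto simp: mem_twoByN)
    moreover have "cle (i, Min ?r) (i, j)" "cle (i, j) (i, Max ?r)" using j by (auto simp: cle_def)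
    ultimately show "(i, j) \<in> I" using IC min_in max_in unfolding interval_closed_def by blast
  qed
  with bounds show thesis by (rule that)
qed

lemma interval_closed_two_rows_overlap:
  assumes IC: "interval_closed (twoByN n) cle (two_rows p1 q1 p2 q2)" and ne: "p1 \<le> q1" "p2 \<le> q2"
  shows "q2 < p1 \<or> p2 \<le> p1 \<and> p1 \<le> q2 \<and> q2 \<le> q1"
proof (cases "q2 < p1")
  case False
  have ends: "(1, p1) \<in> two_rows p1 q1 p2 q2" "(2, q2) \<in> two_rows p1 q1 p2 q2" using ne by simp_all
  then have "(1, p1) \<in> twoByN n" "(2, q2) \<in> twoByN n" using IC by (auto simp: interval_closed_def)
  then have "(1, q2) \<in> twoByN n" "cle (1, p1) (1, q2)" "cle (1, q2) (2, q2)"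
    and "(2, p1) \<in> twoByN n" "cle (1, p1) (2, p1)" "cle (2, p1) (2, q2)"
    using False by (auto simp: mem_twoByN cle_def)
  then have "(1, q2) \<in> two_rows p1 q1 p2 q2" "(2, p1) \<in> two_rows p1 q1 p2 q2"
    using IC ends unfolding interval_closed_def by blast+
  then show ?thesis using False by auto
qed simp

lemma interval_closed_twoByN_cases:
  assumes IC: "interval_closed (twoByN n) cle I"
  obtains p1 q1 p2 q2 where "I = two_rows p1 q1 p2 q2" "1 \<le> p1" "q1 \<le> n" "1 \<le> p2" "q2 \<le> n"
    and "p1 \<le> q1 \<Longrightarrow> p2 \<le> q2 \<Longrightarrow> q2 < p1 \<or> p2 \<le> p1 \<and> p1 \<le> q2 \<and> q2 \<le> q1"
proof -
  obtain p1 q1 where r1: "1 \<le> p1" "q1 \<le> n" "\<And>j. (1, j) \<in> I \<longleftrightarrow> p1 \<le> j \<and> j \<le> q1"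
    using interval_closed_twoByN_row[OF IC] by blast
  obtain p2 q2 where r2: "1 \<le> p2" "q2 \<le> n" "\<And>j. (2, j) \<in> I \<longleftrightarrow> p2 \<le> j \<and> j \<le> q2"
    using interval_closed_twoByN_row[OF IC] by blast
  have IP: "I \<subseteq> twoByN n" using IC by (simp add: interval_closed_def)
  have "(i, j) \<in> I \<longleftrightarrow> (i, j) \<in> two_rows p1 q1 p2 q2" for i j
  proof (cases "i = 1 \<or> i = 2")
    case True
    then show ?thesis using r1 r2 by auto
  next
    case False
    then show ?thesis using IP by (auto simp: mem_twoByN)
  qed
  then have I: "I = two_rows p1 q1 p2 q2" by (simp add: set_eq_iff split_paired_All)
  show thesis
    using that[OF I r1(1,2) r2(1,2)] interval_closed_two_rows_overlap IC unfolding I by blast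
qed

definition overhang_right :: "(nat \<times> nat) set \<Rightarrow> bool" where
  "overhang_right I \<longleftrightarrow> (\<exists>b c. (1, b) \<in> I \<and> (2, c) \<in> I \<and> b \<le> c) \<and>
     (\<exists>d. (1, d) \<in> I \<and> (\<forall>e. (2, e) \<in> I \<longrightarrow> e < d))"

definition overhang_left :: "(nat \<times> nat) set \<Rightarrow> bool" where
  "overhang_left I \<longleftrightarrow> (\<exists>b c. (1, b) \<in> I \<and> (2, c) \<in> I \<and> b \<le> c) \<and>
     (\<exists>d. (2, d) \<in> I \<and> (\<forall>e. (1, e) \<in> I \<longrightarrow> d < e))"

lemma overhang_right_two_rows:
  "overhang_right (two_rows p1 q1 p2 q2) \<longleftrightarrow> p1 \<le> q1 \<and> p2 \<le> q2 \<and> p1 \<le> q2 \<and> q2 < q1"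
proof
  assume "overhang_right (two_rows p1 q1 p2 q2)"
  then obtain b c d where "(1, b) \<in> two_rows p1 q1 p2 q2" "(2, c) \<in> two_rows p1 q1 p2 q2" "b \<le> c"
    "(1, d) \<in> two_rows p1 q1 p2 q2" "\<forall>e. (2, e) \<in> two_rows p1 q1 p2 q2 \<longrightarrow> e < d"
    unfolding overhang_right_def by blast
  moreover from calculation have "q2 < d" by simp
  ultimately show "p1 \<le> q1 \<and> p2 \<le> q2 \<and> p1 \<le> q2 \<and> q2 < q1" by auto
next
  assume "p1 \<le> q1 \<and> p2 \<le> q2 \<and> p1 \<le> q2 \<and> q2 < q1"
  then show "overhang_right (two_rows p1 q1 p2 q2)" unfolding overhang_right_def
    by (intro conjI exI[of _ p1] exI[of _ q2] exI[of _ q1]) auto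
qed

lemma overhang_left_two_rows:
  "overhang_left (two_rows p1 q1 p2 q2) \<longleftrightarrow> p1 \<le> q1 \<and> p2 \<le> q2 \<and> p1 \<le> q2 \<and> p2 < p1"
proof
  assume "overhang_left (two_rows p1 q1 p2 q2)"
  then obtain b c d where "(1, b) \<in> two_rows p1 q1 p2 q2" "(2, c) \<in> two_rows p1 q1 p2 q2" "b \<le> c"
    "(2, d) \<in> two_rows p1 q1 p2 q2" "\<forall>e. (1, e) \<in> two_rows p1 q1 p2 q2 \<longrightarrow> d < e"
    unfolding overhang_left_def by blast
  moreover from calculation have "d < p1" by simp
  ultimately show "p1 \<le> q1 \<and> p2 \<le> q2 \<and> p1 \<le> q2 \<and> p2 < p1" by auto
next
  assume "p1 \<le> q1 \<and> p2 \<le> q2 \<and> p1 \<le> q2 \<and> p2 < p1"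
  then show "overhang_left (two_rows p1 q1 p2 q2)" unfolding overhang_left_def
    by (intro conjI exI[of _ p1] exI[of _ q2] exI[of _ p2]) auto
qed

lemma maxel_two_rows:
  "maxel cle (two_rows p1 q1 p2 q2) =
     (if p2 \<le> q2 then {(2, q2)} else {}) \<union> (if p1 \<le> q1 \<and> (q2 < p2 \<or> q2 < q1) then {(1, q1)} else {})"
    (is "_ = ?M")
proof (rule set_eqI)
  fix x :: "nat \<times> nat"
  obtain i j where x: "x = (i, j)" by fastforce
  show "x \<in> maxel cle (two_rows p1 q1 p2 q2) \<longleftrightarrow> x \<in> ?M"
  proof
    assume "x \<in> maxel cle (two_rows p1 q1 p2 q2)"
    then have "(i, j) \<in> two_rows p1 q1 p2 q2"
      and "\<forall>y\<in>two_rows p1 q1 p2 q2. cle (i, j) y \<longrightarrow> y = (i, j)"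
      unfolding maxel_def x by auto
    then have "(i, j) \<in> two_rows p1 q1 p2 q2"
      and "p2 \<le> q2 \<longrightarrow> cle (i, j) (2, q2) \<longrightarrow> (2, q2) = (i, j)"
      and "p1 \<le> q1 \<longrightarrow> cle (i, j) (1, q1) \<longrightarrow> (1, q1) = (i, j)"
      by auto
    then show "x \<in> ?M" unfolding x by (auto simp: cle_def)
  qed (auto simp: x maxel_def cle_def split: if_splits)
qed

lemma minel_two_rows:
  "minel cle (two_rows p1 q1 p2 q2) =
     (if p1 \<le> q1 then {(1, p1)} else {}) \<union> (if p2 \<le> q2 \<and> (q1 < p1 \<or> p2 < p1) then {(2, p2)} else {})"
    (is "_ = ?M")
proof (rule set_eqI)
  fix x :: "nat \<times> nat"
  obtain i j where x: "x = (i, j)" by fastforce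
  show "x \<in> minel cle (two_rows p1 q1 p2 q2) \<longleftrightarrow> x \<in> ?M"
  proof
    assume "x \<in> minel cle (two_rows p1 q1 p2 q2)"
    then have "(i, j) \<in> two_rows p1 q1 p2 q2"
      and "\<forall>y\<in>two_rows p1 q1 p2 q2. cle y (i, j) \<longrightarrow> y = (i, j)"
      unfolding minel_def x by auto
    then have "(i, j) \<in> two_rows p1 q1 p2 q2"
      and "p1 \<le> q1 \<longrightarrow> cle (1, p1) (i, j) \<longrightarrow> (1, p1) = (i, j)"
      and "p2 \<le> q2 \<longrightarrow> cle (2, p2) (i, j) \<longrightarrow> (2, p2) = (i, j)"
      by auto
    then show "x \<in> ?M" unfolding x by (auto simp: cle_def)
  qed (auto simp: x minel_def cle_def split: if_splits)
qed

lemma card_maxel_minus_card_minel: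
  assumes "interval_closed (twoByN n) cle I"
  shows "real (card (maxel cle I)) - real (card (minel cle I)) =
    of_bool (overhang_right I) - of_bool (overhang_left I)"
proof -
  obtain p1 q1 p2 q2 where I: "I = two_rows p1 q1 p2 q2"
    and "p1 \<le> q1 \<Longrightarrow> p2 \<le> q2 \<Longrightarrow> q2 < p1 \<or> p2 \<le> p1 \<and> p1 \<le> q2 \<and> q2 \<le> q1"
    using interval_closed_twoByN_cases[OF assms] by metis
  then show ?thesis
    unfolding I maxel_two_rows minel_two_rows overhang_right_two_rows overhang_left_two_rows
    by auto
qed


context
  fixes n :: nat and xs :: "(nat \<times> nat) list" and I :: "(nat \<times> nat) set"
  assumes lin: "linear_extension (twoByN n) cle xs"
    and I_IC: "interval_closed (twoByN n) cle I"
begin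

abbreviation Row :: "(nat \<times> nat) set" where
  "Row \<equiv> rowmotion (twoByN n) cle xs I"

lemma rowmotion_subset_twoByN: "Row \<subseteq> twoByN n"
  using interval_closed_rowmotion[OF I_IC] by (simp add: interval_closed_def)

lemma row2_successor_in_rowmotion:
  assumes I: "I = two_rows p1 q1 p2 q2" and h: "p2 \<le> p1" "p2 \<le> q2" "q2 < q1" "q1 \<le> n"
  shows "(2, q2 + 1) \<in> Row"
proof (rule ccontr)
  assume out: "(2, q2 + 1) \<notin> Row"
  have x: "(2, q2 + 1) \<in> twoByN n" using h by (simp add: mem_twoByN)
  have beyond: "(2, e) \<notin> Row" if e: "q2 + 1 < e" for e
  proof
    assume eR: "(2, e) \<in> Row"
    then have eP: "(2, e) \<in> twoByN n" using rowmotion_subset_twoByN by blast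
    have "grid.gap_below n I (2, e)" unfolding grid.gap_below_def
      by (rule bexI[of _ "(2, q2)"], rule bexI[of _ "(2, q2 + 1)"])
        (use I e h x in \<open>auto simp: cle_def\<close>)
    then show False using grid.mem_rowmotion_iff_if_gap[OF lin I_IC eP] eR I e by simp
  qed
  have "\<not> grid.gap_below n I (2, q2 + 1)"
  proof
    assume "grid.gap_below n I (2, q2 + 1)"
    then obtain a1 a2 z1 z2 where "(a1, a2) \<in> I" "(z1, z2) \<in> twoByN n" "cle (a1, a2) (z1, z2)"
      "cle (z1, z2) (2, q2 + 1)" "(z1, z2) \<notin> I" "(z1, z2) \<noteq> (2, q2 + 1)"
      unfolding grid.gap_below_def by auto
    then show False using I h by (auto simp: mem_twoByN cle_def)
  qed
  moreover have "\<not> grid.gap_above n Row (2, q2 + 1)"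
  proof
    assume "grid.gap_above n Row (2, q2 + 1)"
    then obtain b1 b2 z1 z2 where b: "(b1, b2) \<in> Row" "(z1, z2) \<in> twoByN n"
      "cle (2, q2 + 1) (z1, z2)" "cle (z1, z2) (b1, b2)" "(z1, z2) \<notin> Row" "(z1, z2) \<noteq> (2, q2 + 1)"
      unfolding grid.gap_above_def by auto
    have "(b1, b2) \<in> twoByN n" using b rowmotion_subset_twoByN by blast
    then have "b1 = 2" "q2 + 1 < b2 \<or> (b1, b2) = (z1, z2)" using b by (auto simp: mem_twoByN cle_def)
    then show False using beyond[of b2] b by auto
  qed
  moreover have "(2, q2 + 1) \<notin> I" using I by simp
  ultimately show False using grid.avoided_by_rowmotion_imp_gap[OF lin I_IC x] out by blast
qed

lemma row1_start_not_in_rowmotion: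
  assumes I: "I = two_rows p1 q1 p2 q2" and "p1 \<le> q1"
    and next_in: "(1, p1 + 1) \<in> Row" and "e \<le> p1"
  shows "(1, e) \<notin> Row"
proof
  assume "(1, e) \<in> Row"
  moreover have first: "(1, p1) \<in> I" using I \<open>p1 \<le> q1\<close> by simp
  moreover have "(1, p1) \<in> twoByN n" using first I_IC by (auto simp: interval_closed_def)
  moreover have "cle (1, e) (1, p1)" "cle (1, p1) (1, p1 + 1)" using \<open>e \<le> p1\<close> by (auto simp: cle_def)
  ultimately have "(1, p1) \<in> Row" "(1, p1) \<in> twoByN n" "(1, p1) \<in> I"
    using interval_closed_rowmotion[OF I_IC] next_in unfolding interval_closed_def by blast+
  then have "grid.has_lower I (1, p1)"
    using grid.kept_by_rowmotion_imp_sandwiched[OF lin I_IC] by blast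
  then obtain a1 a2 where "(a1, a2) \<in> I" "cle (a1, a2) (1, p1)" "(a1, a2) \<noteq> (1, p1)"
    unfolding grid.has_lower_def by auto
  then show False using I by (auto simp: cle_def)
qed

lemma overhang_left_rowmotion_of_two_rows:
  assumes I: "I = two_rows p1 q1 p2 q2"
    and h: "p2 \<le> p1" "p1 \<le> q2" "q2 < q1" "q1 \<le> n" "1 \<le> p2"
  shows "overhang_left Row"
proof -
  have top: "(2, q2 + 1) \<in> Row" using row2_successor_in_rowmotion[OF I] h by simp
  note sandwiched = grid.mem_rowmotion_iff_if_sandwiched[OF lin I_IC]
  have "(1, p1 + 1) \<in> Row \<longleftrightarrow> (1, p1 + 1) \<in> I"
  proof (rule sandwiched)
    show "grid.has_lower I (1, p1 + 1)" unfolding grid.has_lower_def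
      by (rule bexI[of _ "(1, p1)"]) (use I h in \<open>auto simp: cle_def\<close>)
    show "grid.has_upper Row (1, p1 + 1)" unfolding grid.has_upper_def
      by (rule bexI[of _ "(2, q2 + 1)"]) (use h top in \<open>auto simp: cle_def\<close>)
  qed (use h in \<open>simp add: mem_twoByN\<close>)
  then have second: "(1, p1 + 1) \<in> Row" using I h by simp
  define d where "d = (if p1 = p2 then p2 else p2 + 1)"
  have "(2, d) \<in> Row \<longleftrightarrow> (2, d) \<in> I"
  proof (rule sandwiched)
    show "grid.has_lower I (2, d)" unfolding grid.has_lower_def
      by (rule bexI[of _ "if p1 = p2 then (1, p1) else (2, p2)"]) (use I h in \<open>auto simp: cle_def d_def\<close>)
    show "grid.has_upper Row (2, d)" unfolding grid.has_upper_def
      by (rule bexI[of _ "(2, q2 + 1)"]) (use h top in \<open>auto simp: cle_def d_def\<close>)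
  qed (use h in \<open>auto simp: mem_twoByN d_def\<close>)
  then have row2_start: "(2, d) \<in> Row" using I h by (auto simp: d_def)
  have "d < e" if "(1, e) \<in> Row" for e
    using row1_start_not_in_rowmotion[OF I _ second, of e] that h by (force simp: d_def)
  then show ?thesis unfolding overhang_left_def
    using second top row2_start h by (intro conjI exI[of _ "p1 + 1"] exI[of _ "q2 + 1"] exI[of _ d]) auto
qed

lemma row1_predecessor_in_preimage:
  assumes R: "Row = two_rows p1 q1 p2 q2"
    and h: "p2 < p1" "p1 \<le> q1" "q2 \<le> q1" "q1 \<le> n" "1 \<le> p2"
  shows "(1, p1 - 1) \<in> I"
proof (rule ccontr)
  assume out: "(1, p1 - 1) \<notin> I"
  have IP: "I \<subseteq> twoByN n" using I_IC by (simp add: interval_closed_def)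
  have x: "(1, p1 - 1) \<in> twoByN n" using h by (simp add: mem_twoByN, arith)
  have before: "(1, e) \<notin> I" if e: "1 \<le> e" "e + 1 < p1" for e
  proof
    assume eI: "(1, e) \<in> I"
    then have eP: "(1, e) \<in> twoByN n" using IP by blast
    have "grid.gap_above n Row (1, e)" unfolding grid.gap_above_def
      by (rule bexI[of _ "(1, p1)"], rule bexI[of _ "(1, p1 - 1)"])
        (use R e h x in \<open>auto simp: cle_def\<close>)
    then show False using grid.mem_rowmotion_iff_if_gap[OF lin I_IC eP] eI R e by simp
  qed
  have "\<not> grid.gap_above n Row (1, p1 - 1)"
  proof
    assume "grid.gap_above n Row (1, p1 - 1)"
    then obtain b1 b2 z1 z2 where "(b1, b2) \<in> Row" "(z1, z2) \<in> twoByN n" "cle (1, p1 - 1) (z1, z2)"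
      "cle (z1, z2) (b1, b2)" "(z1, z2) \<notin> Row" "(z1, z2) \<noteq> (1, p1 - 1)"
      unfolding grid.gap_above_def by auto
    then show False using R h by (auto simp: mem_twoByN cle_def)
  qed
  moreover have "\<not> grid.gap_below n I (1, p1 - 1)"
  proof
    assume "grid.gap_below n I (1, p1 - 1)"
    then obtain a1 a2 z1 z2 where a: "(a1, a2) \<in> I" "(z1, z2) \<in> twoByN n"
      "cle (a1, a2) (z1, z2)" "cle (z1, z2) (1, p1 - 1)" "(z1, z2) \<notin> I" "(z1, z2) \<noteq> (1, p1 - 1)"
      unfolding grid.gap_below_def by auto
    have "(a1, a2) \<in> twoByN n" using a IP by blast
    then have "a1 = 1" "1 \<le> a2" "a2 + 1 < p1 \<or> (a1, a2) = (z1, z2)"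
      using a by (auto simp: mem_twoByN cle_def)
    then show False using before[of a2] a by auto
  qed
  moreover have "(1, p1 - 1) \<notin> Row" using R h by simp
  ultimately show False using grid.avoided_by_rowmotion_imp_gap[OF lin I_IC x] out by blast
qed

lemma row2_end_not_in_preimage:
  assumes R: "Row = two_rows p1 q1 p2 q2" and "p2 \<le> q2"
    and prev_in: "(2, q2 - 1) \<in> I" and "q2 \<le> e"
  shows "(2, e) \<notin> I"
proof
  assume "(2, e) \<in> I"
  moreover have last: "(2, q2) \<in> Row" using R \<open>p2 \<le> q2\<close> by simp
  moreover have "(2, q2) \<in> twoByN n" using last rowmotion_subset_twoByN by blast
  moreover have "cle (2, q2 - 1) (2, q2)" "cle (2, q2) (2, e)" using \<open>q2 \<le> e\<close> by (auto simp: cle_def)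
  ultimately have "(2, q2) \<in> I" "(2, q2) \<in> twoByN n" "(2, q2) \<in> Row"
    using I_IC prev_in unfolding interval_closed_def by blast+
  then have "grid.has_upper Row (2, q2)"
    using grid.kept_by_rowmotion_imp_sandwiched[OF lin I_IC] by blast
  then obtain b1 b2 where "(b1, b2) \<in> Row" "cle (2, q2) (b1, b2)" "(b1, b2) \<noteq> (2, q2)"
    unfolding grid.has_upper_def by auto
  then show False using R by (auto simp: cle_def)
qed

lemma overhang_right_of_rowmotion_two_rows:
  assumes R: "Row = two_rows p1 q1 p2 q2"
    and h: "p2 < p1" "p1 \<le> q2" "q2 \<le> q1" "q1 \<le> n" "1 \<le> p2"
  shows "overhang_right I"
proof -
  have bottom: "(1, p1 - 1) \<in> I" using row1_predecessor_in_preimage[OF R] h by simp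
  note sandwiched = grid.mem_rowmotion_iff_if_sandwiched[OF lin I_IC]
  have "(2, q2 - 1) \<in> Row \<longleftrightarrow> (2, q2 - 1) \<in> I"
  proof (rule sandwiched)
    show "grid.has_lower I (2, q2 - 1)" unfolding grid.has_lower_def
      by (rule bexI[of _ "(1, p1 - 1)"]) (use h bottom in \<open>auto simp: cle_def\<close>)
    show "grid.has_upper Row (2, q2 - 1)" unfolding grid.has_upper_def
      by (rule bexI[of _ "(2, q2)"]) (use R h in \<open>auto simp: cle_def\<close>)
  qed (use h in \<open>auto simp: mem_twoByN\<close>)
  then have second_last: "(2, q2 - 1) \<in> I" using R h by auto
  define d where "d = (if q1 = q2 then q1 else q1 - 1)"
  have "(1, d) \<in> Row \<longleftrightarrow> (1, d) \<in> I"
  proof (rule sandwiched)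
    show "grid.has_lower I (1, d)" unfolding grid.has_lower_def
      by (rule bexI[of _ "(1, p1 - 1)"]) (use h bottom in \<open>auto simp: cle_def d_def\<close>)
    show "grid.has_upper Row (1, d)" unfolding grid.has_upper_def
      by (rule bexI[of _ "if q1 = q2 then (2, q2) else (1, q1)"]) (use R h in \<open>auto simp: cle_def d_def\<close>)
  qed (use h in \<open>auto simp: mem_twoByN d_def\<close>)
  then have row1_end: "(1, d) \<in> I" using R h by (auto simp: d_def)
  have "e < d" if "(2, e) \<in> I" for e
    using row2_end_not_in_preimage[OF R _ second_last, of e] that h by (force simp: d_def)
  then show ?thesis unfolding overhang_right_def
    using bottom second_last row1_end h
    by (intro conjI exI[of _ "p1 - 1"] exI[of _ "q2 - 1"] exI[of _ d]) auto
qed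

lemma overhang_right_iff_overhang_left_rowmotion: "overhang_right I \<longleftrightarrow> overhang_left Row"
proof
  assume right: "overhang_right I"
  obtain p1 q1 p2 q2 where I: "I = two_rows p1 q1 p2 q2" "q1 \<le> n" "1 \<le> p2"
    and shape: "p1 \<le> q1 \<Longrightarrow> p2 \<le> q2 \<Longrightarrow> q2 < p1 \<or> p2 \<le> p1 \<and> p1 \<le> q2 \<and> q2 \<le> q1"
    using interval_closed_twoByN_cases[OF I_IC] by metis
  with right show "overhang_left Row"
    using overhang_left_rowmotion_of_two_rows by (auto simp: overhang_right_two_rows)
next
  assume left: "overhang_left Row"
  obtain p1 q1 p2 q2 where R: "Row = two_rows p1 q1 p2 q2" "q1 \<le> n" "1 \<le> p2"
    and shape: "p1 \<le> q1 \<Longrightarrow> p2 \<le> q2 \<Longrightarrow> q2 < p1 \<or> p2 \<le> p1 \<and> p1 \<le> q2 \<and> q2 \<le> q1"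
    using interval_closed_twoByN_cases[OF interval_closed_rowmotion[OF I_IC]] by metis
  with left show "overhang_right I"
    using overhang_right_of_rowmotion_two_rows by (auto simp: overhang_left_two_rows)
qed

end

theorem theorem4p7:
  fixes n :: nat and xs :: "(nat \<times> nat) list"
  assumes "n \<ge> 1"
    and "linear_extension (twoByN n) cle xs"
  shows "mesic (IC (twoByN n) cle) (rowmotion (twoByN n) cle xs)
           (\<lambda>I. real (card (maxel cle I)) - real (card (minel cle I))) 0"
proof (rule mesic_zero_if_coboundary[where g = "\<lambda>I. of_bool (overhang_left I)"])
  show "finite (IC (twoByN n) cle)" by (rule finite_IC) (simp add: twoByN_def)
  show "rowmotion (twoByN n) cle xs ` IC (twoByN n) cle \<subseteq> IC (twoByN n) cle"
    using rowmotion_in_IC by blast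
  show "inj_on (rowmotion (twoByN n) cle xs) (IC (twoByN n) cle)" by (rule inj_on_rowmotion)
  fix I assume "I \<in> IC (twoByN n) cle"
  then have "interval_closed (twoByN n) cle I" by (simp add: IC_def)
  then show "real (card (maxel cle I)) - real (card (minel cle I)) =
      of_bool (overhang_left (rowmotion (twoByN n) cle xs I)) - of_bool (overhang_left I)"
    using card_maxel_minus_card_minel overhang_right_iff_overhang_left_rowmotion[OF assms(2)]
    by simp
qed

end
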